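(* Let $G$ be a virtually abelian group and let $H\le G$ be a finite-index normal subgroup with $H\cong\mathbb{Z}^n$. Then there exists a finite generating set $S$ of $G$ (with $S=S^{-1}$, $e\notin S$) such that $\kappa(h)=0$ for every $h\in H\smallsetminus\{e\}$, where $\kappa$ is computed with respect to $S$.
   Context: For a group $G$ with finite generating set $S$ ($S=S^{-1}$, $e\notin S$), $|x|$ denotes the word length of $x\in G$ with respect to $S$. For $g\in G$ define $\mathrm{Av}(g)=\frac{1}{|S|}\sum_{a\in S}|a^{-1}ga|$, and for $g\neq e$ define the curvature $\kappa(g)=\frac{|g|-\mathrm{Av}(g)}{|g|}$. *)

theory Defs
  imports "HOL-Algebra.Algebra"
begin

definition word_length :: "('a, 'b) monoid_scheme \<Rightarrow> 'a set \<Rightarrow> 'a \<Rightarrow> nat" where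
  "word_length G S x =
     (LEAST k. \<exists>ws. length ws = k \<and> set ws \<subseteq> S \<and> foldr (\<otimes>\<^bsub>G\<^esub>) ws \<one>\<^bsub>G\<^esub> = x)"

definition Av :: "('a, 'b) monoid_scheme \<Rightarrow> 'a set \<Rightarrow> 'a \<Rightarrow> real" where
  "Av G S g = (1 / real (card S)) *
     (\<Sum>a\<in>S. real (word_length G S (inv\<^bsub>G\<^esub> a \<otimes>\<^bsub>G\<^esub> g \<otimes>\<^bsub>G\<^esub> a)))"

definition curvature :: "('a, 'b) monoid_scheme \<Rightarrow> 'a set \<Rightarrow> 'a \<Rightarrow> real" where
  "curvature G S g = (real (word_length G S g) - Av G S g) / real (word_length G S g)"

definition Zn_group :: "nat \<Rightarrow> (nat \<Rightarrow> int) monoid" where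
  "Zn_group n = product_group {..<n} (\<lambda>_. integer_group)"

end

theory Submission
  imports Defs
begin

text \<open>Start from a finite symmetric generating set, keep its elements outside \<open>H\<close>, and replace
  the others by all \<open>G\<close>-conjugates of the nontrivial elements of \<open>H\<close> that are products of at most
  \<open>[G : H]\<close> old generators; as \<open>H\<close> is abelian of finite index, each of these has only finitely
  many conjugates. By pigeonhole on cosets, a word longer than \<open>[G : H]\<close> contains a nonempty block
  of length at most \<open>[G : H]\<close> whose product lies in \<open>H\<close>, and moving that block to the front turns
  it into a single conjugated generator. Hence every element of \<open>H\<close> has a geodesic word in the
  conjugation-invariant part of the new generating set, so conjugation preserves word length
  on \<open>H\<close>, \<open>Av(h) = |h|\<close> and \<open>\<kappa>(h) = 0\<close>.\<close>

definition word_prod :: "('a, 'b) monoid_scheme \<Rightarrow> 'a list \<Rightarrow> 'a" where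
  "word_prod G ws = foldr (\<otimes>\<^bsub>G\<^esub>) ws \<one>\<^bsub>G\<^esub>"

lemma word_length_eq_Least:
  "word_length G S x = (LEAST k. \<exists>ws. length ws = k \<and> set ws \<subseteq> S \<and> word_prod G ws = x)"
  by (simp add: word_length_def word_prod_def)

lemma word_length_le: "set ws \<subseteq> S \<Longrightarrow> word_length G S (word_prod G ws) \<le> length ws"
  unfolding word_length_eq_Least by (rule Least_le) auto

lemma word_length_attained:
  assumes "set ws \<subseteq> S" "word_prod G ws = x"
  shows "\<exists>ws'. length ws' = word_length G S x \<and> set ws' \<subseteq> S \<and> word_prod G ws' = x"
  unfolding word_length_eq_Least by (rule LeastI_ex) (use assms in blast)

context monoid
begin

lemma word_prod_Nil [simp]: "word_prod G [] = \<one>"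
  and word_prod_Cons [simp]: "word_prod G (x # xs) = x \<otimes> word_prod G xs"
  by (simp_all add: word_prod_def)

lemma word_prod_closed [simp]: "set ws \<subseteq> carrier G \<Longrightarrow> word_prod G ws \<in> carrier G"
  by (induction ws) auto

lemma word_prod_append:
  "set u \<subseteq> carrier G \<Longrightarrow> set v \<subseteq> carrier G \<Longrightarrow>
    word_prod G (u @ v) = word_prod G u \<otimes> word_prod G v"
  by (induction u) (auto simp: m_assoc)

end

context group
begin

lemma inv_mult_cancel_left [simp]: "x \<in> carrier G \<Longrightarrow> y \<in> carrier G \<Longrightarrow> inv x \<otimes> (x \<otimes> y) = y"
  and mult_inv_cancel_left [simp]: "x \<in> carrier G \<Longrightarrow> y \<in> carrier G \<Longrightarrow> x \<otimes> (inv x \<otimes> y) = y"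
  by (simp_all add: m_assoc[symmetric])

lemma word_prod_map_conj:
  "set ws \<subseteq> carrier G \<Longrightarrow> g \<in> carrier G \<Longrightarrow>
    word_prod G (map (\<lambda>s. g \<otimes> s \<otimes> inv g) ws) = g \<otimes> word_prod G ws \<otimes> inv g"
  by (induction ws) (auto simp: m_assoc)

lemma word_prod_rev_map_inv:
  "set ws \<subseteq> carrier G \<Longrightarrow> word_prod G (rev (map (\<lambda>x. inv x) ws)) = inv (word_prod G ws)"
proof (induction ws)
  case (Cons a ws)
  then have "set (rev (map (\<lambda>x. inv x) ws)) \<subseteq> carrier G" by auto
  with Cons show ?case by (simp add: word_prod_append inv_mult_group)
qed simp

lemma word_prod_extract_block:
  assumes "set (u @ b @ v) \<subseteq> carrier G"
  shows "word_prod G (u @ b @ v) =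
    (word_prod G u \<otimes> word_prod G b \<otimes> inv (word_prod G u)) \<otimes> word_prod G (u @ v)"
  using assms by (simp add: word_prod_append m_assoc)

lemma generate_imp_word_prod:
  assumes "S \<subseteq> carrier G" "\<And>s. s \<in> S \<Longrightarrow> inv s \<in> S" "x \<in> generate G S"
  shows "\<exists>ws. set ws \<subseteq> S \<and> word_prod G ws = x"
  using assms(3)
proof (induction rule: generate.induct)
  case one
  show ?case by (intro exI[of _ "[]"]) simp
next
  case (incl h)
  then show ?case using assms(1) by (intro exI[of _ "[h]"]) auto
next
  case (inv h)
  then show ?case using assms by (intro exI[of _ "[inv h]"]) auto
next
  case (eng h1 h2)
  then obtain u v where "set u \<subseteq> S" "word_prod G u = h1" "set v \<subseteq> S" "word_prod G v = h2"
    by blast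
  then show ?case using assms(1) by (intro exI[of _ "u @ v"]) (auto simp: word_prod_append)
qed

text \<open>Pigeonhole on the cosets of the suffix products; suffixes rather than prefixes make
  normality unnecessary.\<close>

lemma word_has_short_block_in_subgroup:
  assumes H: "subgroup H G" and fin: "finite (rcosets H)"
    and long: "card (rcosets H) < length ws" and ws: "set ws \<subseteq> carrier G"
  shows "\<exists>u b v. ws = u @ b @ v \<and> b \<noteq> [] \<and> length b \<le> card (rcosets H) \<and> word_prod G b \<in> H"
proof -
  let ?N = "card (rcosets H)"
  define coset where "coset i = H #> word_prod G (drop i ws)" for i
  have drop_carrier: "set (drop i ws) \<subseteq> carrier G" for i
    using ws by (meson in_set_dropD subset_iff)
  have "coset ` {0..?N} \<subseteq> rcosets H"
    unfolding coset_def using drop_carrier by (auto intro!: rcosetsI subgroup.subset[OF H])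
  then have "\<not> inj_on coset {0..?N}"
    using card_inj_on_le[OF _ _ fin] by fastforce
  then obtain i j where "j \<le> ?N" "i \<le> ?N" "i \<noteq> j" "coset i = coset j"
    unfolding inj_on_def by auto
  then obtain i j where ij: "i < j" "j \<le> ?N" "coset i = coset j"
    by (metis linorder_neqE_nat)
  define u b v where "u = take i ws" and "b = take (j - i) (drop i ws)" and "v = drop j ws"
  have "drop (j - i) (drop i ws) = v" unfolding v_def using ij(1) by simp
  then have drop_i: "drop i ws = b @ v" unfolding b_def by (metis append_take_drop_id)
  have split: "ws = u @ b @ v" unfolding u_def by (metis append_take_drop_id drop_i)
  have bv: "set b \<subseteq> carrier G" "set v \<subseteq> carrier G" using split ws by auto
  have "word_prod G (drop i ws) \<in> H #> word_prod G v"
    using repr_independenceD[OF H _ ij(3)[symmetric, unfolded coset_def]] drop_carrier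
    unfolding v_def by simp
  then have "word_prod G b \<otimes> word_prod G v \<otimes> inv (word_prod G v) \<in> H"
    using subgroup.rcos_module_imp[OF H is_group] bv by (simp add: drop_i word_prod_append)
  then have "word_prod G b \<in> H" using bv by (simp add: m_assoc)
  moreover have "length b = j - i" using ij long unfolding b_def by auto
  ultimately show ?thesis using split ij by (intro exI[of _ u] exI[of _ b] exI[of _ v]) auto
qed

lemma finite_conjugates_in_abelian_normal:
  assumes HN: "H \<lhd> G" and fin: "finite (rcosets H)"
    and comm: "\<And>x y. x \<in> H \<Longrightarrow> y \<in> H \<Longrightarrow> x \<otimes> y = y \<otimes> x" and b: "b \<in> H"
  shows "finite {g \<otimes> b \<otimes> inv g | g. g \<in> carrier G}"
proof -
  have H: "subgroup H G" using HN normal_imp_subgroup by blast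
  have bc: "b \<in> carrier G" using b subgroup.mem_carrier[OF H] by blast
  define conj_rep where "conj_rep C = (SOME r. r \<in> C) \<otimes> b \<otimes> inv (SOME r. r \<in> C)" for C
  have "{g \<otimes> b \<otimes> inv g | g. g \<in> carrier G} \<subseteq> conj_rep ` (rcosets H)"
  proof safe
    fix g assume g: "g \<in> carrier G"
    have "(SOME r. r \<in> H #> g) \<in> H #> g" using rcos_self[OF g H] by (rule someI)
    then obtain k where k: "k \<in> H" "(SOME r. r \<in> H #> g) = k \<otimes> g"
      unfolding r_coset_def by auto
    have kc: "k \<in> carrier G" using k(1) subgroup.mem_carrier[OF H] by blast
    have conj_H: "g \<otimes> b \<otimes> inv g \<in> H" using normal.inv_op_closed2[OF HN g b] .
    have "conj_rep (H #> g) = k \<otimes> (g \<otimes> b \<otimes> inv g) \<otimes> inv k"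
      unfolding conj_rep_def k(2) using kc g bc by (simp add: m_assoc inv_mult_group)
    also have "\<dots> = g \<otimes> b \<otimes> inv g"
      using comm[OF k(1) conj_H] kc g bc by (simp add: m_assoc)
    finally show "g \<otimes> b \<otimes> inv g \<in> conj_rep ` (rcosets H)"
      using rcosetsI[OF subgroup.subset[OF H] g] by (metis image_eqI)
  qed
  then show ?thesis using fin finite_subset by blast
qed

lemma finitely_generated_of_finite_index:
  assumes H: "subgroup H G" and fin: "finite (rcosets H)"
    and E: "finite E" "E \<subseteq> carrier G" "H \<subseteq> generate G E"
  shows "\<exists>F. finite F \<and> F \<subseteq> carrier G \<and> generate G F = carrier G"
proof -
  define R where "R = (\<lambda>C. SOME r. r \<in> C) ` (rcosets H)"
  have rep: "(SOME r. r \<in> H #> x) \<in> H #> x" if "x \<in> carrier G" for x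
    using rcos_self[OF that H] by (rule someI)
  have R_carrier: "R \<subseteq> carrier G"
    unfolding R_def RCOSETS_def
    using rep r_coset_subset_G[OF subgroup.subset[OF H]] by blast
  have ER: "E \<union> R \<subseteq> carrier G" using E(2) R_carrier by blast
  have "x \<in> generate G (E \<union> R)" if x: "x \<in> carrier G" for x
  proof -
    let ?r = "SOME r. r \<in> H #> x"
    have rc: "?r \<in> carrier G" using rep[OF x] R_carrier rcosetsI[OF subgroup.subset[OF H] x]
      unfolding R_def by blast
    have "?r \<otimes> inv x \<in> generate G (E \<union> R)"
      using subgroup.rcos_module_imp[OF H is_group x rep[OF x]] E(3) mono_generate[of E "E \<union> R"]
      by blast
    moreover have "?r \<in> generate G (E \<union> R)"
      unfolding R_def using rcosetsI[OF subgroup.subset[OF H] x] by (blast intro: generate.incl)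
    ultimately have "inv (?r \<otimes> inv x) \<otimes> ?r \<in> generate G (E \<union> R)"
      using generate_is_subgroup[OF ER] by (simp add: subgroup.m_closed subgroup.m_inv_closed)
    moreover have "inv (?r \<otimes> inv x) \<otimes> ?r = x" using x rc by (simp add: inv_mult_group m_assoc)
    ultimately show ?thesis by simp
  qed
  then show ?thesis
    using generate_in_carrier[OF ER] E(1) R_def fin ER
    by (intro exI[of _ "E \<union> R"]) auto
qed

end

locale abelian_normal_finite_index = group G for G (structure) +
  fixes H :: "'a set" and F :: "'a set"
  assumes normal_H: "H \<lhd> G"
    and finite_index: "finite (rcosets H)"
    and H_comm: "\<And>x y. x \<in> H \<Longrightarrow> y \<in> H \<Longrightarrow> x \<otimes> y = y \<otimes> x"
    and finite_F: "finite F" and F_carrier: "F \<subseteq> carrier G"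
    and generate_F: "generate G F = carrier G"
begin

lemma subgroup_H: "subgroup H G"
  using normal_H normal_imp_subgroup by blast

lemma H_carrier: "H \<subseteq> carrier G"
  using subgroup.subset[OF subgroup_H] .

definition sym_gens :: "'a set" where
  "sym_gens = F \<union> (\<lambda>x. inv x) ` F"

definition short_products :: "'a set" where
  "short_products = word_prod G ` {ws. set ws \<subseteq> sym_gens \<and> length ws \<le> card (rcosets H)}"

definition H_gens :: "'a set" where
  "H_gens = {g \<otimes> b \<otimes> inv g | g b. g \<in> carrier G \<and> b \<in> short_products \<inter> H - {\<one>}}"

definition gens :: "'a set" where
  "gens = (sym_gens - H) \<union> H_gens"

lemma sym_gens_carrier: "sym_gens \<subseteq> carrier G"
  using F_carrier unfolding sym_gens_def by auto

lemma inv_sym_gens: "s \<in> sym_gens \<Longrightarrow> inv s \<in> sym_gens"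
  using F_carrier unfolding sym_gens_def by auto

lemma finite_sym_gens: "finite sym_gens"
  unfolding sym_gens_def using finite_F by simp

lemma finite_short_products: "finite short_products"
  unfolding short_products_def using finite_lists_length_le[OF finite_sym_gens] by simp

lemma short_products_carrier: "short_products \<subseteq> carrier G"
  unfolding short_products_def using sym_gens_carrier by auto

lemma sym_gens_short_products: "s \<in> sym_gens \<Longrightarrow> s \<in> short_products"
proof -
  assume s: "s \<in> sym_gens"
  have "H \<in> rcosets H" using subgroup.subgroup_in_rcosets[OF subgroup_H is_group] .
  then have "card (rcosets H) > 0" using finite_index card_gt_0_iff by blast
  moreover have "s = word_prod G [s]" using s sym_gens_carrier by auto
  ultimately show "s \<in> short_products"
    unfolding short_products_def using s by (intro image_eqI[of _ _ "[s]"]) simp_all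
qed

lemma inv_short_products: "b \<in> short_products \<Longrightarrow> inv b \<in> short_products"
proof -
  assume "b \<in> short_products"
  then obtain ws where ws: "set ws \<subseteq> sym_gens" "length ws \<le> card (rcosets H)" "b = word_prod G ws"
    unfolding short_products_def by blast
  then have "inv b = word_prod G (rev (map (\<lambda>x. inv x) ws))"
    using word_prod_rev_map_inv sym_gens_carrier by auto
  moreover have "set (rev (map (\<lambda>x. inv x) ws)) \<subseteq> sym_gens" using ws(1) inv_sym_gens by auto
  ultimately show "inv b \<in> short_products"
    unfolding short_products_def using ws(2) by auto
qed

lemma H_gens_subset: "H_gens \<subseteq> H"
  unfolding H_gens_def by (blast intro: normal.inv_op_closed2[OF normal_H])

lemma conj_H_gens:
  assumes g: "g \<in> carrier G" and s: "s \<in> H_gens"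
  shows "g \<otimes> s \<otimes> inv g \<in> H_gens"
proof -
  obtain g' b where gb: "s = g' \<otimes> b \<otimes> inv g'" "g' \<in> carrier G" "b \<in> short_products \<inter> H - {\<one>}"
    using s unfolding H_gens_def by blast
  have "b \<in> carrier G" using gb(3) short_products_carrier by blast
  then have "g \<otimes> s \<otimes> inv g = (g \<otimes> g') \<otimes> b \<otimes> inv (g \<otimes> g')"
    using gb(1,2) g by (simp add: m_assoc inv_mult_group)
  then show ?thesis unfolding H_gens_def using gb g by blast
qed

lemma conj_short_product:
  assumes "g \<in> carrier G" "b \<in> short_products" "b \<in> H"
  shows "g \<otimes> b \<otimes> inv g \<in> insert \<one> H_gens"
proof (cases "b = \<one>")
  case True
  then show ?thesis using assms(1) by simp
next
  case False
  then show ?thesis using assms unfolding H_gens_def by blast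
qed

lemma finite_H_gens: "finite H_gens"
proof -
  have "H_gens = (\<Union>b\<in>short_products \<inter> H - {\<one>}. {g \<otimes> b \<otimes> inv g | g. g \<in> carrier G})"
    unfolding H_gens_def by blast
  moreover have "finite (short_products \<inter> H - {\<one>})" using finite_short_products by simp
  ultimately show ?thesis
    using finite_conjugates_in_abelian_normal[OF normal_H finite_index H_comm] by simp
qed

lemma finite_gens: "finite gens"
  unfolding gens_def using finite_sym_gens finite_H_gens by simp

lemma gens_carrier: "gens \<subseteq> carrier G"
  unfolding gens_def using sym_gens_carrier H_gens_subset H_carrier by auto

lemma inv_gens: "s \<in> gens \<Longrightarrow> inv s \<in> gens"
proof (unfold gens_def, elim UnE)
  assume s: "s \<in> sym_gens - H"
  then have "inv s \<notin> H"
    using subgroup.m_inv_closed[OF subgroup_H] sym_gens_carrier by fastforce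
  then show "inv s \<in> sym_gens - H \<union> H_gens" using s inv_sym_gens by blast
next
  assume "s \<in> H_gens"
  then obtain g b where gb: "s = g \<otimes> b \<otimes> inv g" "g \<in> carrier G" "b \<in> short_products \<inter> H - {\<one>}"
    unfolding H_gens_def by blast
  have b: "b \<in> carrier G" using gb(3) short_products_carrier by blast
  then have "inv s = g \<otimes> inv b \<otimes> inv g"
    using gb(1,2) by (simp add: inv_mult_group m_assoc)
  moreover have "inv b \<in> short_products \<inter> H - {\<one>}"
    using gb(3) b inv_short_products subgroup.m_inv_closed[OF subgroup_H] by simp
  ultimately show "inv s \<in> sym_gens - H \<union> H_gens" unfolding H_gens_def using gb(2) by blast
qed

lemma one_notin_gens: "\<one> \<notin> gens"
proof
  assume "\<one> \<in> gens"
  then obtain g b where gb: "\<one> = g \<otimes> b \<otimes> inv g" "g \<in> carrier G" "b \<in> short_products - {\<one>}"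
    unfolding gens_def H_gens_def using subgroup.one_closed[OF subgroup_H] by blast
  have b: "b \<in> carrier G" using gb(3) short_products_carrier by blast
  then have "g \<otimes> b = \<one> \<otimes> g" using gb(1)[symmetric] gb(2) inv_solve_right' by simp
  then show False using gb(2,3) b by simp
qed

lemma generate_gens: "generate G gens = carrier G"
proof
  show "generate G gens \<subseteq> carrier G" using generate_in_carrier[OF gens_carrier] by blast
  have "F \<subseteq> generate G gens"
  proof
    fix f assume f: "f \<in> F"
    then have "f \<in> sym_gens" unfolding sym_gens_def by blast
    then consider "f \<in> sym_gens - H" | "f = \<one>" | "f \<in> short_products \<inter> H - {\<one>}"
      using sym_gens_short_products by blast
    then show "f \<in> generate G gens"
    proof cases
      case 3
      then have "\<one> \<otimes> f \<otimes> inv \<one> \<in> H_gens" unfolding H_gens_def by blast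
      then have "f \<in> gens" using f F_carrier unfolding gens_def by auto
      then show ?thesis by (rule generate.incl)
    qed (auto simp: gens_def intro: generate.incl generate.one)
  qed
  then show "carrier G \<subseteq> generate G gens"
    using generate_subgroup_incl[OF _ generate_is_subgroup[OF gens_carrier]] generate_F by blast
qed

lemma gens_word_block:
  assumes ws: "set ws \<subseteq> gens" "ws \<noteq> []" "word_prod G ws \<in> H"
  shows "\<exists>u b v. ws = u @ b @ v \<and> b \<noteq> [] \<and>
    word_prod G u \<otimes> word_prod G b \<otimes> inv (word_prod G u) \<in> insert \<one> H_gens"
proof (cases "\<exists>s\<in>set ws. s \<in> H_gens")
  case True
  then obtain s where s: "s \<in> set ws" "s \<in> H_gens" by blast
  then obtain u v where "ws = u @ s # v" using split_list by metis
  then have "ws = u @ [s] @ v" by simp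
  moreover note s(2)
  moreover have "set u \<subseteq> carrier G" "s \<in> carrier G"
    using calculation ws(1) gens_carrier by auto
  ultimately show ?thesis using conj_H_gens by (intro exI[of _ u] exI[of _ "[s]"] exI[of _ v]) auto
next
  case False
  then have ws_sym: "set ws \<subseteq> sym_gens" using ws(1) unfolding gens_def by blast
  show ?thesis
  proof (cases "length ws \<le> card (rcosets H)")
    case True
    then have "word_prod G ws \<in> short_products" unfolding short_products_def using ws_sym by blast
    then show ?thesis
      using conj_short_product[OF one_closed _ ws(3)] ws(2) short_products_carrier
      by (intro exI[of _ "[]"] exI[of _ ws] exI[of _ "[]"]) auto
  next
    case False
    moreover have "set ws \<subseteq> carrier G" using ws_sym sym_gens_carrier by blast
    ultimately obtain u b v where uvb: "ws = u @ b @ v" "b \<noteq> []"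
        "length b \<le> card (rcosets H)" "word_prod G b \<in> H"
      using word_has_short_block_in_subgroup[OF subgroup_H finite_index] by (meson not_le)
    then have "word_prod G b \<in> short_products" unfolding short_products_def using ws_sym by auto
    moreover have "word_prod G u \<in> carrier G" using uvb ws_sym sym_gens_carrier by auto
    ultimately show ?thesis using conj_short_product uvb by blast
  qed
qed

text \<open>Each step moves a block to the front, where it becomes one generator from \<open>H_gens\<close>
  (or disappears), so the length never increases.\<close>

lemma gens_word_in_H_shortening:
  assumes "set ws \<subseteq> gens" "word_prod G ws \<in> H"
  shows "\<exists>ws'. set ws' \<subseteq> H_gens \<and> length ws' \<le> length ws \<and> word_prod G ws' = word_prod G ws"
  using assms
proof (induction "length ws" arbitrary: ws rule: less_induct)
  case less
  show ?case
  proof (cases "ws = []")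
    case False
    then obtain u b v where block: "ws = u @ b @ v" "b \<noteq> []"
      and c: "word_prod G u \<otimes> word_prod G b \<otimes> inv (word_prod G u) \<in> insert \<one> H_gens"
      using gens_word_block less.prems by blast
    let ?c = "word_prod G u \<otimes> word_prod G b \<otimes> inv (word_prod G u)"
    have carrier: "set u \<subseteq> carrier G" "set b \<subseteq> carrier G" "set v \<subseteq> carrier G"
      using less.prems(1) block(1) gens_carrier by auto
    have ws_eq: "word_prod G ws = ?c \<otimes> word_prod G (u @ v)"
      using word_prod_extract_block carrier block(1) by simp
    have c_H: "?c \<in> H" using c H_gens_subset subgroup.one_closed[OF subgroup_H] by auto
    have "word_prod G (u @ v) = inv ?c \<otimes> word_prod G ws"
      using ws_eq carrier by simp
    then have "word_prod G (u @ v) \<in> H"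
      using c_H less.prems(2) subgroup.m_closed[OF subgroup_H] subgroup.m_inv_closed[OF subgroup_H]
      by simp
    moreover have shorter: "length (u @ v) < length ws" using block by simp
    moreover have "set (u @ v) \<subseteq> gens" using less.prems(1) block(1) by auto
    ultimately obtain ws' where ws': "set ws' \<subseteq> H_gens" "length ws' \<le> length (u @ v)"
        "word_prod G ws' = word_prod G (u @ v)"
      using less.hyps by blast
    show ?thesis
    proof (cases "?c = \<one>")
      case True
      then have "word_prod G ws' = word_prod G ws" using ws'(3) ws_eq carrier by simp
      then show ?thesis using ws'(1,2) shorter by (intro exI[of _ ws']) simp
    next
      case False
      then have "?c \<in> H_gens" using c by blast
      moreover have "word_prod G (?c # ws') = word_prod G ws" using ws'(3) ws_eq by simp
      ultimately show ?thesis using ws'(1,2) shorter by (intro exI[of _ "?c # ws'"]) simp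
    qed
  qed simp
qed

lemma word_length_conj_le:
  assumes h: "h \<in> H" and g: "g \<in> carrier G"
  shows "word_length G gens (g \<otimes> h \<otimes> inv g) \<le> word_length G gens h"
proof -
  obtain ws where "set ws \<subseteq> gens" "word_prod G ws = h"
    using generate_imp_word_prod[OF gens_carrier inv_gens] generate_gens h H_carrier by blast
  then obtain ws where ws: "length ws = word_length G gens h" "set ws \<subseteq> gens" "word_prod G ws = h"
    using word_length_attained by metis
  then obtain ws' where ws': "set ws' \<subseteq> H_gens" "length ws' \<le> length ws" "word_prod G ws' = h"
    using gens_word_in_H_shortening h by metis
  let ?conj_ws = "map (\<lambda>s. g \<otimes> s \<otimes> inv g) ws'"
  have "set ?conj_ws \<subseteq> gens" using conj_H_gens g ws'(1) unfolding gens_def by auto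
  moreover have "word_prod G ?conj_ws = g \<otimes> h \<otimes> inv g"
    using word_prod_map_conj g ws' H_gens_subset H_carrier by auto
  ultimately have "word_length G gens (g \<otimes> h \<otimes> inv g) \<le> length ?conj_ws"
    using word_length_le by metis
  then show ?thesis using ws ws' by simp
qed

lemma word_length_conj:
  assumes h: "h \<in> H" and a: "a \<in> carrier G"
  shows "word_length G gens (inv a \<otimes> h \<otimes> a) = word_length G gens h"
proof (rule antisym)
  show "word_length G gens (inv a \<otimes> h \<otimes> a) \<le> word_length G gens h"
    using word_length_conj_le[OF h inv_closed[OF a]] a by simp
  have "inv a \<otimes> h \<otimes> a \<in> H" using normal.inv_op_closed1[OF normal_H a h] .
  moreover have "a \<otimes> (inv a \<otimes> h \<otimes> a) \<otimes> inv a = h"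
    using a h H_carrier by (simp add: m_assoc subset_iff)
  ultimately show "word_length G gens h \<le> word_length G gens (inv a \<otimes> h \<otimes> a)"
    using word_length_conj_le[OF _ a] by metis
qed

lemma curvature_gens_eq_0:
  assumes h: "h \<in> H" "h \<noteq> \<one>"
  shows "curvature G gens h = 0"
proof -
  obtain ws where "set ws \<subseteq> gens" "word_prod G ws = h"
    using generate_imp_word_prod[OF gens_carrier inv_gens] generate_gens h(1) H_carrier by blast
  then obtain ws where ws: "length ws = word_length G gens h" "set ws \<subseteq> gens" "word_prod G ws = h"
    using word_length_attained by metis
  have "ws \<noteq> []" using ws(3) h(2) by auto
  then have "gens \<noteq> {}" using ws(2) by auto
  then have "card gens > 0" using finite_gens by (simp add: card_gt_0_iff)
  moreover have "(\<Sum>a\<in>gens. real (word_length G gens (inv a \<otimes> h \<otimes> a))) =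
      (\<Sum>a\<in>gens. real (word_length G gens h))"
    using word_length_conj[OF h(1)] gens_carrier by (intro sum.cong) auto
  ultimately have "Av G gens h = real (word_length G gens h)" unfolding Av_def by simp
  then show ?thesis unfolding curvature_def by simp
qed

end

lemma comm_group_Zn_group: "comm_group (Zn_group n)"
  unfolding Zn_group_def
  by (rule group.group_comm_groupI) (auto simp: add.commute intro: restrict_ext)

definition Zn_axis :: "nat \<Rightarrow> nat \<Rightarrow> int \<Rightarrow> nat \<Rightarrow> int" where
  "Zn_axis n j k = (\<lambda>i\<in>{..<n}. if i = j then k else 0)"

lemma Zn_group_one: "\<one>\<^bsub>Zn_group n\<^esub> = (\<lambda>i\<in>{..<n}. 0)"
  and Zn_group_mult: "x \<otimes>\<^bsub>Zn_group n\<^esub> y = (\<lambda>i\<in>{..<n}. x i + y i)"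
  unfolding Zn_group_def by simp_all

lemma Zn_axis_carrier: "Zn_axis n j k \<in> carrier (Zn_group n)"
  unfolding Zn_axis_def Zn_group_def by auto

lemma Zn_axes_carrier: "(\<lambda>j. Zn_axis n j 1) ` {..<n} \<subseteq> carrier (Zn_group n)"
  using Zn_axis_carrier by (rule image_subsetI)

lemma Zn_axis_in_generate:
  assumes j: "j < n"
  shows "Zn_axis n j k \<in> generate (Zn_group n) ((\<lambda>j. Zn_axis n j 1) ` {..<n})"
    (is "_ \<in> ?gen")
proof -
  interpret Z: group "Zn_group n" using comm_group_Zn_group by (rule comm_group.axioms(2))
  have subgroup_gen: "subgroup ?gen (Zn_group n)"
    using Z.generate_is_subgroup[OF Zn_axes_carrier] .
  have nat_multiple: "Zn_axis n j (int m) \<in> ?gen" for m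
  proof (induction m)
    case 0
    have "Zn_axis n j (int 0) = \<one>\<^bsub>Zn_group n\<^esub>" unfolding Zn_group_one Zn_axis_def by auto
    then show ?case using generate.one by metis
  next
    case (Suc m)
    have "Zn_axis n j (int (Suc m)) = Zn_axis n j (int m) \<otimes>\<^bsub>Zn_group n\<^esub> Zn_axis n j 1"
      unfolding Zn_group_mult Zn_axis_def by auto
    moreover have "Zn_axis n j 1 \<in> ?gen" using j by (auto intro: generate.incl)
    ultimately show ?case using Suc generate.eng by metis
  qed
  show ?thesis
  proof (cases "k \<ge> 0")
    case True
    then show ?thesis using nat_multiple[of "nat k"] by simp
  next
    case False
    define m where "m = nat (- k)"
    have "- k = int m" unfolding m_def using False by simp
    then have "Zn_axis n j k = inv\<^bsub>Zn_group n\<^esub> (Zn_axis n j (int m))"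
      unfolding Zn_group_def Zn_axis_def by (subst inv_product_group) auto
    then show ?thesis using subgroup.m_inv_closed[OF subgroup_gen nat_multiple] by simp
  qed
qed

lemma generate_Zn_group_axes:
  "generate (Zn_group n) ((\<lambda>j. Zn_axis n j 1) ` {..<n}) = carrier (Zn_group n)"
  (is "?gen = _")
proof -
  interpret Z: group "Zn_group n" using comm_group_Zn_group by (rule comm_group.axioms(2))
  have "f \<in> ?gen" if f: "f \<in> carrier (Zn_group n)" for f
  proof -
    define prefix where "prefix m = (\<lambda>i\<in>{..<n}. if i < m then f i else 0)" for m
    have "prefix m \<in> ?gen" for m
    proof (induction m)
      case 0
      have "prefix 0 = \<one>\<^bsub>Zn_group n\<^esub>" unfolding Zn_group_one prefix_def by auto
      then show ?case using generate.one by metis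
    next
      case (Suc m)
      show ?case
      proof (cases "m < n")
        case True
        have "prefix (Suc m) = prefix m \<otimes>\<^bsub>Zn_group n\<^esub> Zn_axis n m (f m)"
          unfolding Zn_group_mult prefix_def Zn_axis_def by auto
        then show ?thesis using Suc Zn_axis_in_generate[OF True] generate.eng by metis
      next
        case False
        then have "prefix (Suc m) = prefix m" unfolding prefix_def by auto
        then show ?thesis using Suc by simp
      qed
    qed
    moreover have "prefix n = f"
      using f unfolding prefix_def Zn_group_def by (auto simp: PiE_iff extensional_def intro!: ext)
    ultimately show ?thesis by metis
  qed
  then show ?thesis using Z.generate_in_carrier[OF Zn_axes_carrier] by blast
qed

context group
begin

lemma iso_Zn_group_imp_comm:
  assumes H: "subgroup H G" and iso: "G\<lparr>carrier := H\<rparr> \<cong> Zn_group n"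
    and "x \<in> H" "y \<in> H"
  shows "x \<otimes> y = y \<otimes> x"
proof -
  have "group (G\<lparr>carrier := H\<rparr>)" using subgroup_imp_group[OF H] .
  then have "comm_group (G\<lparr>carrier := H\<rparr>)"
    using comm_group.iso_imp_comm_group[OF comm_group_Zn_group group.iso_sym] iso
    by (metis group.is_monoid)
  then interpret K: comm_group "G\<lparr>carrier := H\<rparr>" .
  show ?thesis using K.m_comm assms(3,4) by simp
qed

lemma iso_Zn_group_imp_finitely_generated:
  assumes H: "subgroup H G" and iso: "G\<lparr>carrier := H\<rparr> \<cong> Zn_group n"
  shows "\<exists>E. finite E \<and> E \<subseteq> H \<and> generate G E = H"
proof -
  let ?K = "G\<lparr>carrier := H\<rparr>"
  let ?E = "(\<lambda>j. Zn_axis n j 1) ` {..<n}"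
  have K: "group ?K" using subgroup_imp_group[OF H] .
  obtain \<psi> where \<psi>: "\<psi> \<in> iso (Zn_group n) ?K"
    using group.iso_sym[OF K iso] unfolding is_iso_def by blast
  interpret \<psi>: group_hom "Zn_group n" ?K \<psi>
    using \<psi> K comm_group_Zn_group
    by (simp add: group_hom_def group_hom_axioms_def comm_group.axioms(2) iso_imp_homomorphism)
  have "generate ?K (\<psi> ` ?E) = \<psi> ` carrier (Zn_group n)"
    using \<psi>.generate_img[OF Zn_axes_carrier] generate_Zn_group_axes by simp
  also have "\<dots> = H" using \<psi> unfolding iso_def bij_betw_def by simp
  finally have "generate ?K (\<psi> ` ?E) = H" .
  moreover have "\<psi> ` ?E \<subseteq> H" using \<psi> Zn_axes_carrier unfolding iso_def bij_betw_def by auto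
  ultimately show ?thesis using generate_consistent[OF _ H] by (intro exI[of _ "\<psi> ` ?E"]) simp
qed

end

theorem mainTheorem2:
  fixes G :: "('a, 'b) monoid_scheme" and H :: "'a set" and n :: nat
  assumes "group G"
    and "H \<lhd> G"
    and "finite (rcosets\<^bsub>G\<^esub> H)"
    and "G\<lparr>carrier := H\<rparr> \<cong> Zn_group n"
  shows "\<exists>S. finite S \<and> S \<subseteq> carrier G \<and> (\<forall>s\<in>S. inv\<^bsub>G\<^esub> s \<in> S) \<and> \<one>\<^bsub>G\<^esub> \<notin> S
           \<and> generate G S = carrier G
           \<and> (\<forall>h\<in>H - {\<one>\<^bsub>G\<^esub>}. curvature G S h = 0)"
proof -
  interpret group G by fact
  have H: "subgroup H G" using assms(2) normal_imp_subgroup by blast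
  obtain E where E: "finite E" "E \<subseteq> H" "generate G E = H"
    using iso_Zn_group_imp_finitely_generated[OF H assms(4)] by blast
  obtain F where F: "finite F" "F \<subseteq> carrier G" "generate G F = carrier G"
    using finitely_generated_of_finite_index[OF H assms(3) E(1)] E(2,3) subgroup.subset[OF H]
    by blast
  interpret abelian_normal_finite_index G H F
    by (rule abelian_normal_finite_index.intro[OF assms(1) abelian_normal_finite_index_axioms.intro,
          OF assms(2,3) iso_Zn_group_imp_comm[OF H assms(4)] F])
  show ?thesis
    using finite_gens gens_carrier inv_gens one_notin_gens generate_gens curvature_gens_eq_0
    by (intro exI[of _ gens]) simp
qed

end
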